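(* Let $0\le\beta\le1$ and $f\in\mathcal{A}_{\beta}$ with $f(z)=z+\sum_{n=2}^\infty a_nz^n$. Let $\Gamma_1=-\tfrac12 a_2$ and $\Gamma_2=-\tfrac12\left(a_3-\tfrac32 a_2^2\right)$. Then \[ |\Gamma_1|\le\frac{1}{2-\beta}\qquad\text{and}\qquad|\Gamma_2|\le\frac{5-2\beta-\beta^2}{(2-\beta)^2(3-2\beta)}. \] Both estimates are sharp (attained by some $f\in\mathcal{A}_\beta$).
   Context: $\mathbb{D}$ is the open unit disk; $\mathcal{A}$ is the class of holomorphic $f$ on $\mathbb{D}$ with $f(0)=0$, $f'(0)=1$. For $\beta\in[0,1]$, $\mathcal{A}_{\beta}=\{f\in\mathcal{A}: \operatorname{Re}\big(\beta\, f(z)/z+(1-\beta)f'(z)\big)>0 \text{ for all } z\in\mathbb{D}\}$. The $\Gamma_n$ are the logarithmic inverse coefficients, defined by $\log(f^{-1}(w)/w)=2\sum_{n\ge1}\Gamma_nw^n$ near $0$, where $f^{-1}$ is the local inverse of $f$; the formulas above are the resulting expressions in terms of $a_2,a_3$. *)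

theory Defs
  imports "HOL-Complex_Analysis.Complex_Analysis"
begin

text \<open>At z = 0 the quotient f(z)/z is understood as its removable value f'(0) = 1,
  so the condition there reads Re(beta + (1-beta)) = 1 > 0, which always holds.\<close>

definition class_A :: "(complex \<Rightarrow> complex) set" where
  "class_A = {f. f holomorphic_on ball 0 1 \<and> f 0 = 0 \<and> deriv f 0 = 1}"

definition class_A_beta :: "real \<Rightarrow> (complex \<Rightarrow> complex) set" where
  "class_A_beta \<beta> = {f. f \<in> class_A \<and>
     (\<forall>z\<in>ball 0 1. Re (of_real \<beta> * (if z = 0 then deriv f 0 else f z / z)
                         + (1 - of_real \<beta>) * deriv f z) > 0)}"

definition taylor_coeff :: "(complex \<Rightarrow> complex) \<Rightarrow> nat \<Rightarrow> complex" where
  "taylor_coeff f n = (deriv ^^ n) f 0 / of_nat (fact n)"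

definition Gamma1 :: "(complex \<Rightarrow> complex) \<Rightarrow> complex" where
  "Gamma1 f = - (1/2) * taylor_coeff f 2"

definition Gamma2 :: "(complex \<Rightarrow> complex) \<Rightarrow> complex" where
  "Gamma2 f = - (1/2) * (taylor_coeff f 3 - (3/2) * (taylor_coeff f 2)^2)"

end

theory Submission
  imports Defs
begin

(* Write p(z) = beta f(z)/z + (1 - beta) f'(z) = 1 + c_1 z + c_2 z^2 + ...; comparing coefficients
   gives (n - (n - 1) beta) a_n = c_(n-1). Since Re p > 0, w = (p - 1)/(p + 1) is a Schwarz
   function, whence c_1 = 2 b_1 and c_2 = 2 b_2 + 2 b_1^2 with |b_2| <= 1 - |b_1|^2: apply
   Schwarz's lemma to w(z)/z composed with the disc automorphism moving its value at 0 to 0.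
   In these terms (2 - beta) Gamma_1 = -b_1 and (3 - 2 beta) Gamma_2 = -(b_2 - mu b_1^2) with
   mu = (5 - 2 beta - beta^2)/(2 - beta)^2 >= 1, and |b_2 - mu b_1^2| <= mu follows from the
   triangle inequality. Both bounds are attained by the f with p(z) = (1 + z)/(1 - z), where
   b_1 = 1 and b_2 = 0. *)

definition divide_by_z :: "(complex \<Rightarrow> complex) \<Rightarrow> complex \<Rightarrow> complex" where
  "divide_by_z f z = (if z = 0 then deriv f 0 else f z / z)"

lemma divide_by_z_holomorphic:
  assumes "f holomorphic_on ball 0 r" and "f 0 = 0"
  shows "divide_by_z f holomorphic_on ball 0 r"
  by (rule pole_theorem_open_0[OF assms(1), where a = 0]) (auto simp: divide_by_z_def assms(2))

lemma divide_by_z_has_fps_expansion: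
  assumes hol: "f holomorphic_on ball 0 r" and "0 < r" and "f 0 = 0"
    and F: "f has_fps_expansion F"
  shows "divide_by_z f has_fps_expansion fps_shift 1 F"
proof -
  let ?Q = "fps_expansion (divide_by_z f) 0"
  have Q: "divide_by_z f has_fps_expansion ?Q"
    using divide_by_z_holomorphic[OF hol \<open>f 0 = 0\<close>] \<open>0 < r\<close>
    by (intro has_fps_expansion_fps_expansion) auto
  have "(\<lambda>z. divide_by_z f z * z) = f"
    using \<open>f 0 = 0\<close> by (auto simp: divide_by_z_def)
  then have "f has_fps_expansion ?Q * fps_X"
    using has_fps_expansion_mult[OF Q has_fps_expansion_fps_X] by simp
  then have "F = ?Q * fps_X"
    using F fps_expansion_unique_complex by blast
  then show ?thesis
    using Q by (simp only: fps_shift_times_fps_X')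
qed

lemma has_fps_expansion_imp_deriv_0_eq_fps_nth_1:
  fixes f :: "complex \<Rightarrow> complex"
  assumes "f has_fps_expansion F"
  shows "deriv f 0 = fps_nth F 1"
  using fps_nth_fps_expansion[OF assms, of 1] by simp

lemma Schwarz_Pick_deriv_0:
  assumes holg: "g holomorphic_on ball 0 1"
    and g_lt: "\<And>z. norm z < 1 \<Longrightarrow> norm (g z) < 1"
  shows "norm (deriv g 0) \<le> 1 - (norm (g 0))^2"
proof -
  define b where "b = g 0"
  define h where "h = Moebius_function 0 b \<circ> g"
  have b: "norm b < 1"
    using g_lt[of 0] by (simp add: b_def)
  have "h holomorphic_on ball 0 1"
    unfolding h_def using b g_lt
    by (intro holomorphic_on_compose_gen[OF holg Moebius_function_holomorphic]) auto
  moreover have "h 0 = 0"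
    by (simp add: h_def b_def Moebius_function_eq_zero)
  moreover have "norm (h z) < 1" if "norm z < 1" for z
    using Moebius_function_norm_lt_1[OF b g_lt[OF that]] by (simp add: h_def)
  ultimately have "norm (deriv h 0) \<le> 1"
    using Schwarz_Lemma(2)[of h 0] by simp
  have nb: "0 < 1 - (norm b)^2"
    using b by (simp add: abs_square_less_1)
  have cnj_b: "1 - cnj b * b = of_real (1 - (norm b)^2)"
    using complex_norm_square[of b] by (simp add: mult.commute)
  have den: "1 - cnj b * b \<noteq> 0"
    unfolding cnj_b of_real_eq_0_iff using nb by linarith
  have dg: "(g has_field_derivative deriv g 0) (at 0)"
    using holg by (intro holomorphic_derivI[of _ "ball 0 1"]) auto
  have "(h has_field_derivative deriv g 0 / (1 - cnj b * b)) (at 0)"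
  proof -
    have "h = (\<lambda>z. (g z - b) / (1 - cnj b * g z))"
      by (simp add: h_def o_def Moebius_function_simple)
    moreover have "((\<lambda>z. (g z - b) / (1 - cnj b * g z)) has_field_derivative
        (deriv g 0 * (1 - cnj b * g 0) - (g 0 - b) * (- (cnj b * deriv g 0))) / (1 - cnj b * g 0)^2) (at 0)"
      using dg den unfolding b_def by (auto intro!: derivative_eq_intros simp: power2_eq_square)
    ultimately show ?thesis
      using den by (simp add: b_def power2_eq_square)
  qed
  then have "deriv h 0 = deriv g 0 / of_real (1 - (norm b)^2)"
    unfolding cnj_b by (rule DERIV_imp_deriv)
  then have "norm (deriv h 0) = norm (deriv g 0) / (1 - (norm b)^2)"
    using nb by (simp only: norm_divide norm_of_real abs_of_pos)
  with \<open>norm (deriv h 0) \<le> 1\<close> nb show ?thesis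
    by (simp add: divide_le_eq b_def)
qed

lemma Schwarz_function_coeff_bound:
  assumes holw: "w holomorphic_on ball 0 1" and w0: "w 0 = 0"
    and w_lt: "\<And>z. norm z < 1 \<Longrightarrow> norm (w z) < 1"
    and W: "w has_fps_expansion W"
  shows "norm (fps_nth W 2) \<le> 1 - (norm (fps_nth W 1))^2"
proof (cases "\<exists>\<alpha>. (\<forall>z. norm z < 1 \<longrightarrow> w z = \<alpha> * z) \<and> norm \<alpha> = 1")
  case True
  then obtain \<alpha> where \<alpha>: "\<And>z. norm z < 1 \<Longrightarrow> w z = \<alpha> * z" "norm \<alpha> = 1"
    by blast
  have "eventually (\<lambda>z. z \<in> ball 0 1) (nhds (0::complex))"
    by (intro eventually_nhds_in_open) auto
  then have "eventually (\<lambda>z. \<alpha> * z = w z) (nhds 0)"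
    by eventually_elim (simp add: \<alpha>(1))
  moreover have "(\<lambda>z. \<alpha> * z) has_fps_expansion fps_const \<alpha> * fps_X"
    by (intro fps_expansion_intros)
  ultimately have "w has_fps_expansion fps_const \<alpha> * fps_X"
    using has_fps_expansion_cong by blast
  then have "W = fps_const \<alpha> * fps_X"
    using W fps_expansion_unique_complex by blast
  then show ?thesis
    using \<alpha>(2) by simp
next
  case False
  note Schwarz = Schwarz_Lemma[OF holw w0 w_lt]
  define g where "g = divide_by_z w"
  have G: "g has_fps_expansion fps_shift 1 W"
    unfolding g_def by (rule divide_by_z_has_fps_expansion[OF holw _ w0 W]) simp
  have g_lt: "norm (g z) < 1" if "norm z < 1" for z
  proof (cases "z = 0")
    case True
    then show ?thesis
      using False Schwarz(2,3)[of 0] by (fastforce simp: g_def divide_by_z_def)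
  next
    case z: False
    have "norm (w z) \<le> norm z" "norm (w z) \<noteq> norm z"
      using Schwarz(1,3) False that z by blast+
    then show ?thesis
      using z by (simp add: g_def divide_by_z_def norm_divide divide_less_eq)
  qed
  have "g 0 = fps_nth W 1"
    using has_fps_expansion_imp_0_eq_fps_nth_0[OF G] by simp
  moreover have "deriv g 0 = fps_nth W 2"
    using has_fps_expansion_imp_deriv_0_eq_fps_nth_1[OF G] by (simp add: numeral_2_eq_2)
  moreover have "g holomorphic_on ball 0 1"
    unfolding g_def by (rule divide_by_z_holomorphic[OF holw w0])
  ultimately show ?thesis
    using Schwarz_Pick_deriv_0 g_lt by metis
qed

lemma norm_Cayley_lt_1:
  fixes u :: complex
  assumes "Re u > 0"
  shows "norm ((u - 1) / (u + 1)) < 1"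
proof -
  have "(norm (u - 1))^2 < (norm (u + 1))^2"
    using assms unfolding cmod_power2 by (simp add: power2_eq_square algebra_simps)
  then have "norm (u - 1) < norm (u + 1)"
    by (meson norm_ge_zero power_less_imp_less_base)
  then show ?thesis
    by (simp add: norm_divide divide_less_eq)
qed

lemma Caratheodory_coeffs:
  assumes holp: "p holomorphic_on ball 0 1" and p0: "p 0 = 1"
    and re: "\<And>z. norm z < 1 \<Longrightarrow> Re (p z) > 0"
    and P: "p has_fps_expansion P"
  obtains b1 b2 where "fps_nth P 1 = 2 * b1" and "fps_nth P 2 = 2 * b2 + 2 * b1^2"
    and "norm b2 \<le> 1 - (norm b1)^2"
proof -
  have nz: "p z + 1 \<noteq> 0" if "norm z < 1" for z
  proof
    assume "p z + 1 = 0"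
    then have "Re (p z + 1) = 0"
      by simp
    with re[OF that] show False
      by simp
  qed
  define w where "w z = (p z - 1) / (p z + 1)" for z
  have holw: "w holomorphic_on ball 0 1"
    unfolding w_def using holp nz by (intro holomorphic_intros) auto
  have w0: "w 0 = 0"
    by (simp add: w_def p0)
  have w_lt: "norm (w z) < 1" if "norm z < 1" for z
    unfolding w_def by (rule norm_Cayley_lt_1[OF re[OF that]])
  define W where "W = fps_expansion w 0"
  have Wexp: "w has_fps_expansion W"
    unfolding W_def using holw by (intro has_fps_expansion_fps_expansion) auto
  have "eventually (\<lambda>z. z \<in> ball 0 1) (nhds (0::complex))"
    by (intro eventually_nhds_in_open) auto
  then have ev: "eventually (\<lambda>z. w z * (p z + 1) = p z - 1) (nhds 0)"
    by eventually_elim (use nz in \<open>simp add: w_def\<close>)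
  have "(\<lambda>z. w z * (p z + 1)) has_fps_expansion W * (P + 1)"
    by (intro fps_expansion_intros Wexp P)
  then have "(\<lambda>z. p z - 1) has_fps_expansion W * (P + 1)"
    using has_fps_expansion_cong[OF ev refl] by blast
  moreover have "(\<lambda>z. p z - 1) has_fps_expansion P - 1"
    by (intro fps_expansion_intros P)
  ultimately have eq: "W * (P + 1) = P - 1"
    by (rule fps_expansion_unique_complex)
  have W0: "fps_nth W 0 = 0" and P0: "fps_nth P 0 = 1"
    using has_fps_expansion_imp_0_eq_fps_nth_0[OF Wexp] has_fps_expansion_imp_0_eq_fps_nth_0[OF P]
    by (simp_all add: w0 p0)
  have P1: "fps_nth P 1 = 2 * fps_nth W 1"
    using arg_cong[OF eq, of "\<lambda>F. fps_nth F 1"] W0 P0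
    by (simp add: fps_mult_nth mult.commute)
  moreover have "fps_nth P 2 = 2 * fps_nth W 2 + 2 * (fps_nth W 1)^2"
    using arg_cong[OF eq, of "\<lambda>F. fps_nth F 2"] W0 P0 P1
    by (simp add: fps_mult_nth numeral_2_eq_2 power2_eq_square algebra_simps)
  ultimately show ?thesis
    using that Schwarz_function_coeff_bound[OF holw w0 w_lt Wexp] by blast
qed

definition beta_mix :: "real \<Rightarrow> (complex \<Rightarrow> complex) \<Rightarrow> complex \<Rightarrow> complex" where
  "beta_mix \<beta> f z = of_real \<beta> * divide_by_z f z + (1 - of_real \<beta>) * deriv f z"

definition beta_mix_fps :: "real \<Rightarrow> complex fps \<Rightarrow> complex fps" where
  "beta_mix_fps \<beta> F = fps_const (of_real \<beta>) * fps_shift 1 F + fps_const (1 - of_real \<beta>) * fps_deriv F"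

lemma class_A_beta_iff:
  "f \<in> class_A_beta \<beta> \<longleftrightarrow>
     f holomorphic_on ball 0 1 \<and> f 0 = 0 \<and> deriv f 0 = 1 \<and>
     (\<forall>z. norm z < 1 \<longrightarrow> Re (beta_mix \<beta> f z) > 0)"
  by (auto simp: class_A_beta_def class_A_def beta_mix_def divide_by_z_def)

lemma fps_nth_beta_mix_fps:
  "fps_nth (beta_mix_fps \<beta> F) n = of_real (real (Suc n) - real n * \<beta>) * fps_nth F (Suc n)"
  by (simp add: beta_mix_fps_def algebra_simps)

lemma beta_mix_holomorphic:
  assumes "f holomorphic_on ball 0 1" and "f 0 = 0"
  shows "beta_mix \<beta> f holomorphic_on ball 0 1"
  unfolding beta_mix_def[abs_def] using assms
  by (intro holomorphic_intros divide_by_z_holomorphic holomorphic_deriv) auto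

lemma beta_mix_has_fps_expansion:
  assumes "f holomorphic_on ball 0 1" and "f 0 = 0" and "f has_fps_expansion F"
  shows "beta_mix \<beta> f has_fps_expansion beta_mix_fps \<beta> F"
  unfolding beta_mix_def[abs_def] beta_mix_fps_def using assms
  by (intro fps_expansion_intros divide_by_z_has_fps_expansion[of _ 1] has_fps_expansion_deriv) auto

definition gamma2_weight :: "real \<Rightarrow> real" where
  "gamma2_weight \<beta> = (5 - 2*\<beta> - \<beta>^2) / (2 - \<beta>)^2"

lemma gamma2_weight_ge_1:
  assumes "0 \<le> \<beta>" and "\<beta> \<le> 1"
  shows "1 \<le> gamma2_weight \<beta>"
proof -
  have "0 \<le> \<beta> * (1 - \<beta>)"
    using assms by simp
  then have "(2 - \<beta>)^2 \<le> 5 - 2*\<beta> - \<beta>^2"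
    by (simp add: power2_eq_square algebra_simps)
  then show ?thesis
    using assms by (simp add: gamma2_weight_def)
qed

lemma norm_diff_mult_square_le:
  fixes b1 b2 :: complex
  assumes "1 \<le> \<mu>" and "norm b2 \<le> 1 - (norm b1)^2"
  shows "norm (b2 - of_real \<mu> * b1^2) \<le> \<mu>"
proof -
  have "norm (b2 - of_real \<mu> * b1^2) \<le> norm b2 + \<mu> * (norm b1)^2"
    using norm_triangle_ineq4[of b2 "of_real \<mu> * b1^2"] assms(1) by (simp add: norm_mult norm_power)
  also have "\<dots> \<le> 1 + (\<mu> - 1) * (norm b1)^2"
    using assms(2) by (simp add: algebra_simps)
  also have "\<dots> \<le> \<mu>"
    using assms mult_left_le[of "(norm b1)^2" "\<mu> - 1"] norm_ge_zero[of b2] by simp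
  finally show ?thesis .
qed

lemma Gamma_eq_beta_mix_coeffs:
  fixes \<beta> :: real
  assumes F: "f has_fps_expansion F" and "\<beta> \<le> 1"
    and P1: "fps_nth (beta_mix_fps \<beta> F) 1 = 2 * b1"
    and P2: "fps_nth (beta_mix_fps \<beta> F) 2 = 2 * b2 + 2 * b1^2"
  shows "of_real (2 - \<beta>) * Gamma1 f = - b1"
    and "of_real (3 - 2*\<beta>) * Gamma2 f = - (b2 - of_real (gamma2_weight \<beta>) * b1^2)"
proof -
  have tc: "taylor_coeff f n = fps_nth F n" for n
    unfolding taylor_coeff_def fps_nth_fps_expansion[OF F] by simp
  define d :: complex where "d = of_real \<beta>"
  define a2 a3 where "a2 = taylor_coeff f 2" and "a3 = taylor_coeff f 3"
  have e2: "(2 - d) * a2 = 2 * b1"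
    using P1 by (simp add: fps_nth_beta_mix_fps tc a2_def d_def numeral_2_eq_2)
  have e3: "(3 - 2 * d) * a3 = 2 * b2 + 2 * b1^2"
    using P2 by (simp add: fps_nth_beta_mix_fps tc a3_def d_def numeral_3_eq_3 numeral_2_eq_2)
  have "gamma2_weight \<beta> * (2 - \<beta>)^2 = 5 - 2*\<beta> - \<beta>^2"
    using \<open>\<beta> \<le> 1\<close> by (simp add: gamma2_weight_def)
  then have "of_real (gamma2_weight \<beta> * (2 - \<beta>)^2) = (of_real (5 - 2*\<beta> - \<beta>^2) :: complex)"
    by (rule arg_cong)
  then have m: "of_real (gamma2_weight \<beta>) * (2 - d)^2 = 5 - 2*d - d^2"
    by (simp add: d_def)
  show "of_real (2 - \<beta>) * Gamma1 f = - b1"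
    using e2 by (simp add: Gamma1_def a2_def d_def)
  have b1: "b1 = (2 - d) * a2 / 2"
    using e2 by simp
  have b2: "b2 = (3 - 2*d) * a3 / 2 - b1^2"
    using e3 by (simp add: add_divide_distrib)
  have "of_real (gamma2_weight \<beta>) * b1^2 = of_real (gamma2_weight \<beta>) * (2 - d)^2 * a2^2 / 4"
    by (simp add: b1 power_mult_distrib power_divide)
  then have mb: "of_real (gamma2_weight \<beta>) * b1^2 = (5 - 2*d - d^2) * a2^2 / 4"
    by (simp only: m)
  have t: "of_real (3 - 2*\<beta>) = 3 - 2 * d"
    by (simp add: d_def)
  show "of_real (3 - 2*\<beta>) * Gamma2 f = - (b2 - of_real (gamma2_weight \<beta>) * b1^2)"
    unfolding Gamma2_def t mb a2_def[symmetric] a3_def[symmetric]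
    unfolding b2 unfolding b1
    by (simp add: field_simps power2_eq_square)
qed

lemma norm_of_real_mult_nonneg:
  fixes z :: complex
  assumes "0 \<le> r"
  shows "norm (of_real r * z) = r * norm z"
  using assms by (simp only: norm_mult norm_of_real abs_of_nonneg)

lemma Gamma_bounds:
  assumes "0 \<le> \<beta>" and "\<beta> \<le> 1" and f: "f \<in> class_A_beta \<beta>"
  shows "norm (Gamma1 f) \<le> 1 / (2 - \<beta>)"
    and "norm (Gamma2 f) \<le> gamma2_weight \<beta> / (3 - 2*\<beta>)"
proof -
  have hol: "f holomorphic_on ball 0 1" and "f 0 = 0" and "deriv f 0 = 1"
    and re: "\<And>z. norm z < 1 \<Longrightarrow> Re (beta_mix \<beta> f z) > 0"
    using f by (auto simp: class_A_beta_iff)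
  define F where "F = fps_expansion f 0"
  have F: "f has_fps_expansion F"
    unfolding F_def using hol by (intro has_fps_expansion_fps_expansion) auto
  have "beta_mix \<beta> f 0 = 1"
    using \<open>deriv f 0 = 1\<close> by (simp add: beta_mix_def divide_by_z_def)
  then obtain b1 b2 where P1: "fps_nth (beta_mix_fps \<beta> F) 1 = 2 * b1"
      and P2: "fps_nth (beta_mix_fps \<beta> F) 2 = 2 * b2 + 2 * b1^2"
      and b: "norm b2 \<le> 1 - (norm b1)^2"
    by (rule Caratheodory_coeffs[OF beta_mix_holomorphic[OF hol \<open>f 0 = 0\<close>] _ re
        beta_mix_has_fps_expansion[OF hol \<open>f 0 = 0\<close> F]])
  note Gamma = Gamma_eq_beta_mix_coeffs[OF F \<open>\<beta> \<le> 1\<close> P1 P2]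
  have "(norm b1)^2 \<le> 1"
    using b norm_ge_zero[of b2] by linarith
  then have "norm b1 \<le> 1"
    using abs_square_le_1[of "norm b1"] by simp
  have "(2 - \<beta>) * norm (Gamma1 f) = norm (of_real (2 - \<beta>) * Gamma1 f)"
    using \<open>\<beta> \<le> 1\<close> by (intro norm_of_real_mult_nonneg[symmetric]) simp
  also have "\<dots> = norm b1"
    by (simp only: Gamma(1) norm_minus_cancel)
  also have "\<dots> \<le> 1"
    by fact
  finally show "norm (Gamma1 f) \<le> 1 / (2 - \<beta>)"
    using \<open>\<beta> \<le> 1\<close> by (simp add: le_divide_eq mult.commute)
  have "(3 - 2*\<beta>) * norm (Gamma2 f) = norm (of_real (3 - 2*\<beta>) * Gamma2 f)"
    using \<open>\<beta> \<le> 1\<close> by (intro norm_of_real_mult_nonneg[symmetric]) simp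
  also have "\<dots> = norm (b2 - of_real (gamma2_weight \<beta>) * b1^2)"
    by (simp only: Gamma(2) norm_minus_cancel)
  also have "\<dots> \<le> gamma2_weight \<beta>"
    by (rule norm_diff_mult_square_le[OF gamma2_weight_ge_1[OF assms(1,2)] b])
  finally show "norm (Gamma2 f) \<le> gamma2_weight \<beta> / (3 - 2*\<beta>)"
    using \<open>\<beta> \<le> 1\<close> by (simp add: le_divide_eq mult.commute)
qed

definition Cayley_fps :: "complex fps" where
  "Cayley_fps = Abs_fps (\<lambda>n. if n = 0 then 1 else 2)"

lemma has_fps_expansion_Cayley: "(\<lambda>z. (1 + z) / (1 - z)) has_fps_expansion Cayley_fps"
proof -
  have "(\<lambda>z::complex. (1 + z) * inverse (1 - z)) has_fps_expansion (1 + fps_X) * inverse (1 - fps_X)"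
    by (intro fps_expansion_intros) simp
  moreover have "(1 + fps_X) * inverse (1 - fps_X :: complex fps) = Cayley_fps"
    by (simp add: fps_inverse_one_minus_fps_X Cayley_fps_def fps_eq_iff distrib_right fps_X_mult_nth)
  ultimately show ?thesis
    by (simp add: divide_inverse)
qed

lemma Re_Cayley_pos:
  fixes z :: complex
  assumes "norm z < 1"
  shows "Re ((1 + z) / (1 - z)) > 0"
proof -
  have "Re (1 + z) * Re (1 - z) + Im (1 + z) * Im (1 - z) = 1 - (norm z)^2"
    unfolding cmod_power2 by (simp add: power2_eq_square algebra_simps)
  then have "Re ((1 + z) / (1 - z)) = (1 - (norm z)^2) / (norm (1 - z))^2"
    by (simp only: Re_divide')
  moreover have "(norm z)^2 < 1" and "z \<noteq> 1"
    using assms by (auto simp: abs_square_less_1)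
  ultimately show ?thesis
    by simp
qed

definition extremal_fps :: "real \<Rightarrow> complex fps" where
  "extremal_fps \<beta> = Abs_fps (\<lambda>n. case n of 0 \<Rightarrow> 0
     | Suc m \<Rightarrow> fps_nth Cayley_fps m / of_real (real (Suc m) - real m * \<beta>))"

lemma extremal_denominator_ge_1:
  assumes "\<beta> \<le> 1"
  shows "1 \<le> real (Suc m) - real m * \<beta>"
  using mult_left_mono[OF assms, of "real m"] by simp

lemma beta_mix_fps_extremal:
  assumes "\<beta> \<le> 1"
  shows "beta_mix_fps \<beta> (extremal_fps \<beta>) = Cayley_fps"
proof (rule fps_ext)
  fix n
  have "(of_real (real (Suc n) - real n * \<beta>) :: complex) \<noteq> 0"
    unfolding of_real_eq_0_iff using extremal_denominator_ge_1[OF assms, of n] by linarith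
  then show "fps_nth (beta_mix_fps \<beta> (extremal_fps \<beta>)) n = fps_nth Cayley_fps n"
    by (simp add: fps_nth_beta_mix_fps extremal_fps_def)
qed

lemma fps_conv_radius_ge_1_if_bounded:
  fixes F :: "complex fps"
  assumes bound: "\<And>n. norm (fps_nth F n) \<le> C"
  shows "1 \<le> fps_conv_radius F"
  unfolding fps_conv_radius_def
proof (rule conv_radius_geI_ex')
  fix r :: real
  assume "0 < r" "ereal r < 1"
  then have "summable (\<lambda>n. C * r ^ n)"
    by (intro summable_mult summable_geometric) simp
  then show "summable (\<lambda>n. fps_nth F n * of_real r ^ n)"
  proof (rule summable_comparison_test'[where N = 0])
    fix n
    show "norm (fps_nth F n * of_real r ^ n) \<le> C * r ^ n"
      using bound[of n] \<open>0 < r\<close> by (simp add: norm_mult norm_power mult_right_mono)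
  qed
qed

lemma fps_conv_radius_extremal:
  assumes "\<beta> \<le> 1"
  shows "1 \<le> fps_conv_radius (extremal_fps \<beta>)"
proof (rule fps_conv_radius_ge_1_if_bounded)
  fix n
  show "norm (fps_nth (extremal_fps \<beta>) n) \<le> 2"
  proof (cases n)
    case (Suc m)
    have "norm (fps_nth Cayley_fps m) \<le> 2"
      by (simp add: Cayley_fps_def)
    moreover have "norm (of_real (real (Suc m) - real m * \<beta>) :: complex) \<ge> 1"
      unfolding norm_of_real using extremal_denominator_ge_1[OF assms, of m] by (simp add: abs_if)
    ultimately have "norm (fps_nth Cayley_fps m) / norm (of_real (real (Suc m) - real m * \<beta>) :: complex) \<le> 2 / 1"
      by (intro frac_le) auto
    then show ?thesis
      by (simp only: Suc extremal_fps_def fps_nth_Abs_fps nat.case norm_divide)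
  qed (simp add: extremal_fps_def)
qed

lemma
  assumes "\<beta> \<le> 1"
  shows holomorphic_extremal: "eval_fps (extremal_fps \<beta>) holomorphic_on ball 0 1"
    and has_fps_expansion_extremal: "eval_fps (extremal_fps \<beta>) has_fps_expansion extremal_fps \<beta>"
proof -
  have R: "1 \<le> fps_conv_radius (extremal_fps \<beta>)"
    by (rule fps_conv_radius_extremal[OF assms])
  have "ball (0::complex) 1 \<subseteq> eball 0 (fps_conv_radius (extremal_fps \<beta>))"
  proof
    fix z :: complex
    assume "z \<in> ball 0 1"
    then have "ereal (norm z) < 1"
      by simp
    then show "z \<in> eball 0 (fps_conv_radius (extremal_fps \<beta>))"
      using order_less_le_trans[OF _ R] by simp
  qed
  then show "eval_fps (extremal_fps \<beta>) holomorphic_on ball 0 1"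
    by (rule holomorphic_on_eval_fps)
  have "0 < fps_conv_radius (extremal_fps \<beta>)"
    by (rule order_less_le_trans[OF _ R]) simp
  then show "eval_fps (extremal_fps \<beta>) has_fps_expansion extremal_fps \<beta>"
    by (rule eval_fps_has_fps_expansion)
qed

lemma extremal_in_class_A_beta:
  assumes "\<beta> \<le> 1"
  shows "eval_fps (extremal_fps \<beta>) \<in> class_A_beta \<beta>"
proof -
  define e where "e = eval_fps (extremal_fps \<beta>)"
  have hol: "e holomorphic_on ball 0 1" and E: "e has_fps_expansion extremal_fps \<beta>"
    unfolding e_def using holomorphic_extremal has_fps_expansion_extremal assms by blast+
  have "e 0 = 0" and "deriv e 0 = 1"
    using has_fps_expansion_imp_0_eq_fps_nth_0[OF E] has_fps_expansion_imp_deriv_0_eq_fps_nth_1[OF E]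
    by (simp_all add: extremal_fps_def Cayley_fps_def)
  have P: "beta_mix \<beta> e has_fps_expansion Cayley_fps"
    using beta_mix_has_fps_expansion[OF hol \<open>e 0 = 0\<close> E, of \<beta>] beta_mix_fps_extremal[OF assms] by simp
  have "Re (beta_mix \<beta> e z) > 0" if "norm z < 1" for z
  proof -
    have "(\<lambda>z. (1 + z) / (1 - z)) holomorphic_on ball 0 1"
      by (intro holomorphic_intros) auto
    then have "eval_fps Cayley_fps z = (1 + z) / (1 - z)"
      using has_fps_expansion_imp_eval_fps_eq[OF has_fps_expansion_Cayley that] by blast
    moreover have "eval_fps Cayley_fps z = beta_mix \<beta> e z"
      using has_fps_expansion_imp_eval_fps_eq[OF P that beta_mix_holomorphic[OF hol \<open>e 0 = 0\<close>]] .
    ultimately show ?thesis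
      using Re_Cayley_pos[OF that] by simp
  qed
  with hol \<open>e 0 = 0\<close> \<open>deriv e 0 = 1\<close> show ?thesis
    unfolding e_def class_A_beta_iff by blast
qed

lemma norm_Gamma_extremal:
  assumes "0 \<le> \<beta>" and "\<beta> \<le> 1"
  shows "norm (Gamma1 (eval_fps (extremal_fps \<beta>))) = 1 / (2 - \<beta>)"
    and "norm (Gamma2 (eval_fps (extremal_fps \<beta>))) = gamma2_weight \<beta> / (3 - 2*\<beta>)"
proof -
  let ?e = "eval_fps (extremal_fps \<beta>)"
  have "fps_nth (beta_mix_fps \<beta> (extremal_fps \<beta>)) 1 = 2 * 1"
    and "fps_nth (beta_mix_fps \<beta> (extremal_fps \<beta>)) 2 = 2 * 0 + 2 * 1^2"
    by (simp_all add: beta_mix_fps_extremal[OF assms(2)] Cayley_fps_def)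
  note Gamma = Gamma_eq_beta_mix_coeffs[OF has_fps_expansion_extremal[OF assms(2)] assms(2) this]
  have "(2 - \<beta>) * norm (Gamma1 ?e) = norm (of_real (2 - \<beta>) * Gamma1 ?e)"
    using assms by (intro norm_of_real_mult_nonneg[symmetric]) simp
  also have "\<dots> = 1"
    by (simp only: Gamma(1) norm_minus_cancel norm_one)
  finally show "norm (Gamma1 ?e) = 1 / (2 - \<beta>)"
    using assms by (simp add: field_simps)
  have "0 \<le> gamma2_weight \<beta>"
    using gamma2_weight_ge_1[OF assms] by simp
  have "(3 - 2*\<beta>) * norm (Gamma2 ?e) = norm (of_real (3 - 2*\<beta>) * Gamma2 ?e)"
    using assms by (intro norm_of_real_mult_nonneg[symmetric]) simp
  also have "\<dots> = gamma2_weight \<beta>"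
    using \<open>0 \<le> gamma2_weight \<beta>\<close> by (simp only: Gamma(2)) simp
  finally show "norm (Gamma2 ?e) = gamma2_weight \<beta> / (3 - 2*\<beta>)"
    using assms by (simp add: field_simps)
qed

theorem theorem2p3:
  fixes \<beta> :: real
  assumes "0 \<le> \<beta>" and "\<beta> \<le> 1"
  shows "(\<forall>f\<in>class_A_beta \<beta>.
            norm (Gamma1 f) \<le> 1 / (2 - \<beta>) \<and>
            norm (Gamma2 f) \<le> (5 - 2*\<beta> - \<beta>^2) / ((2 - \<beta>)^2 * (3 - 2*\<beta>)))
       \<and> (\<exists>f\<in>class_A_beta \<beta>. norm (Gamma1 f) = 1 / (2 - \<beta>))
       \<and> (\<exists>f\<in>class_A_beta \<beta>. norm (Gamma2 f) = (5 - 2*\<beta> - \<beta>^2) / ((2 - \<beta>)^2 * (3 - 2*\<beta>)))"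
proof -
  have bound: "(5 - 2*\<beta> - \<beta>^2) / ((2 - \<beta>)^2 * (3 - 2*\<beta>)) = gamma2_weight \<beta> / (3 - 2*\<beta>)"
    by (simp add: gamma2_weight_def)
  show ?thesis
    unfolding bound
    using Gamma_bounds[OF assms] extremal_in_class_A_beta[OF assms(2)] norm_Gamma_extremal[OF assms]
    by blast
qed

end
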